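(* Let $h>0$ and let $(\tau,\mu):\mathbb R\to\mathbb R^2$ be any solution of the system $\tau'=1+K(\tau,\mu)\mu$, $\mu'=-K(\tau,\mu)\tau$. Then there is a compact interval $[A,B]\subset\mathbb R$ such that $\mu\neq0$ outside $[A,B]$ and the function $\nu=-\tau/\mu$ is bounded on $\mathbb R\setminus[A,B]$.
   Context: Fix $h>0$. For $(\tau,\mu)\in\mathbb R^2$ put $r^2=\tau^2+\mu^2$ and define $K:\mathbb R^2\to\mathbb R$ by $$K(\tau,\mu)=\frac{2\big(\tau^2+h^2(1+\mu^2)\big)\tau+(h^2-1)(1+\mu^2)\mu}{(1+r^2)(h^2+r^2)}.$$ Consider the autonomous ODE system $\tau'=1+K(\tau,\mu)\mu$, $\mu'=-K(\tau,\mu)\tau$ for functions $s\mapsto(\tau(s),\mu(s))$; all its solutions are defined on $\mathbb R$. *)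

theory Defs
  imports "HOL-Analysis.Analysis"
begin

definition K :: "real \<Rightarrow> real \<Rightarrow> real \<Rightarrow> real" where
  "K h \<tau> \<mu> =
     (2 * (\<tau>\<^sup>2 + h\<^sup>2 * (1 + \<mu>\<^sup>2)) * \<tau> + (h\<^sup>2 - 1) * (1 + \<mu>\<^sup>2) * \<mu>) /
     ((1 + (\<tau>\<^sup>2 + \<mu>\<^sup>2)) * (h\<^sup>2 + (\<tau>\<^sup>2 + \<mu>\<^sup>2)))"

end

theory Submission
  imports Defs
begin

text \<open>The time reversal \<open>(\<tau>, \<mu>)(s) \<mapsto> (- \<tau> (- s), - \<mu> (- s))\<close> preserves the system because \<open>K\<close>
  is odd, so it suffices to show that for large \<open>s\<close> the function \<open>\<mu>\<close> is negative and
  \<open>\<nu> = - \<tau> / \<mu>\<close> is bounded. Along the flow \<open>\<nu>' = - (\<mu> \<tau>' - \<tau> \<mu>') / \<mu>\<^sup>2\<close>, and the sign of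
  \<open>\<mu> \<tau>' - \<tau> \<mu>'\<close> is explicit on suitable level sets of \<open>\<nu>\<close>. A Gronwall bound for
  \<open>\<mu>' = - K \<tau>\<close> shows that \<open>\<mu> < 0\<close> persists once attained, and barrier arguments at level
  sets of \<open>\<nu>\<close> then trap \<open>\<nu>\<close> between two constants.

  That \<open>\<mu>\<close> becomes negative is proved by contradiction: otherwise \<open>\<mu> > 0\<close> throughout.
  If \<open>\<nu> \<ge> 1/2\<close> forever, then \<open>\<tau> < 0\<close> and \<open>r\<^sup>2 = \<tau>\<^sup>2 + \<mu>\<^sup>2\<close> decreases; either the orbit
  enters a disc around the origin where \<open>\<tau>' \<ge> 1/2\<close>, or \<open>\<tau>\<close> stays below a negative constant
  and \<open>r\<^sup>2\<close> would become negative. If \<open>\<nu> < 1/2\<close> at some time, then afterwards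
  \<open>\<nu>' \<le> - \<gamma> / \<mu>\<close>; either \<open>\<nu>\<close> reaches a sector where \<open>K \<ge> 0\<close>, which forces \<open>\<mu>' \<le> - \<kappa> < 0\<close>,
  or \<open>\<nu>\<close> stays bounded below, which bounds \<open>\<mu>\<close> and drives \<open>\<nu>\<close> to \<open>- \<infinity>\<close>.\<close>

section \<open>Comparison principles for real functions\<close>

lemma last_crossing:
  fixes f :: "real \<Rightarrow> real"
  assumes "continuous_on {a..b} f" and "a \<le> b" and "c \<le> f a" and "f b < c"
  obtains t0 where "a \<le> t0" "t0 < b" "f t0 = c" "\<And>t. t0 < t \<Longrightarrow> t \<le> b \<Longrightarrow> f t < c"
proof -
  define S where "S = {a..b} \<inter> f -` {c..}"
  have "closed S"
    unfolding S_def by (rule continuous_closed_preimage[OF assms(1)]) auto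
  have "a \<in> S" and "bdd_above S"
    unfolding S_def using assms by (auto intro: bdd_aboveI[of _ b])
  define t0 where "t0 = Sup S"
  have "t0 \<in> S"
    unfolding t0_def using closed_contains_Sup \<open>closed S\<close> \<open>a \<in> S\<close> \<open>bdd_above S\<close> by blast
  have "a \<le> t0"
    unfolding t0_def using cSup_upper[OF \<open>a \<in> S\<close> \<open>bdd_above S\<close>] .
  have "t0 < b"
    using \<open>t0 \<in> S\<close> assms(4) unfolding S_def by (cases "t0 = b") auto
  have below: "f t < c" if "t0 < t" "t \<le> b" for t
  proof (rule ccontr)
    assume "\<not> f t < c"
    then have "t \<in> S" unfolding S_def using that \<open>a \<le> t0\<close> by auto
    then show False
      using cSup_upper[OF _ \<open>bdd_above S\<close>] that(1) unfolding t0_def by fastforce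
  qed
  obtain x where "t0 \<le> x" "x \<le> b" "f x = c"
    using IVT2'[of f b c t0] continuous_on_subset[OF assms(1)] \<open>t0 \<in> S\<close> \<open>a \<le> t0\<close> assms(4)
    unfolding S_def by fastforce
  with below have "x = t0" by (metis less_irrefl order_le_less)
  with \<open>f x = c\<close> show ?thesis using that \<open>a \<le> t0\<close> \<open>t0 < b\<close> below by blast
qed

lemma DERIV_barrier_ge:
  fixes f :: "real \<Rightarrow> real"
  assumes der: "\<And>s. a \<le> s \<Longrightarrow> (f has_real_derivative f' s) (at s)"
    and "c \<le> f a"
    and push: "\<And>s. a \<le> s \<Longrightarrow> f s = c \<Longrightarrow> f' s > 0"
    and "a \<le> b"
  shows "c \<le> f b"
proof (rule ccontr)
  assume "\<not> c \<le> f b"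
  have "continuous_on {a..b} f"
    using der by (auto intro!: continuous_at_imp_continuous_on DERIV_isCont)
  then obtain t0 where t0: "a \<le> t0" "t0 < b" "f t0 = c" and below: "\<And>t. t0 < t \<Longrightarrow> t \<le> b \<Longrightarrow> f t < c"
    using last_crossing \<open>a \<le> b\<close> \<open>c \<le> f a\<close> \<open>\<not> c \<le> f b\<close> by (metis not_le)
  obtain d where "d > 0" and up: "\<And>e. 0 < e \<Longrightarrow> e < d \<Longrightarrow> f t0 < f (t0 + e)"
    using DERIV_pos_inc_right[OF der[OF t0(1)] push[OF t0(1,3)]] by blast
  define e where "e = min (d / 2) (b - t0)"
  have "0 < e" "e < d" "t0 + e \<le> b"
    unfolding e_def using \<open>d > 0\<close> t0(2) by auto
  then show False
    using up[of e] below[of "t0 + e"] t0(3) by simp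
qed

lemma DERIV_barrier_le:
  fixes f :: "real \<Rightarrow> real"
  assumes "\<And>s. a \<le> s \<Longrightarrow> (f has_real_derivative f' s) (at s)"
    and "f a \<le> c"
    and "\<And>s. a \<le> s \<Longrightarrow> f s = c \<Longrightarrow> f' s < 0"
    and "a \<le> b"
  shows "f b \<le> c"
  using DERIV_barrier_ge[of a "\<lambda>s. - f s" "\<lambda>s. - f' s" "- c" b] assms
  by (auto intro: derivative_intros)

lemma DERIV_ge_imp_ge_linear:
  fixes f :: "real \<Rightarrow> real"
  assumes "\<And>s. a \<le> s \<Longrightarrow> (f has_real_derivative f' s) (at s)"
    and "\<And>s. a \<le> s \<Longrightarrow> e \<le> f' s"
    and "a \<le> u"
  shows "f a + e * (u - a) \<le> f u"
proof -
  have "(\<lambda>s. f s - e * s) a \<le> (\<lambda>s. f s - e * s) u"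
  proof (rule DERIV_nonneg_imp_nondecreasing[OF assms(3)])
    fix s assume "a \<le> s"
    have "((\<lambda>s. f s - e * s) has_real_derivative f' s - e) (at s)"
      using assms(1)[OF \<open>a \<le> s\<close>] by (auto intro!: derivative_eq_intros)
    then show "\<exists>y. ((\<lambda>s. f s - e * s) has_real_derivative y) (at s) \<and> 0 \<le> y"
      using assms(2)[OF \<open>a \<le> s\<close>] by auto
  qed
  then show ?thesis by (simp add: algebra_simps)
qed

lemma DERIV_le_imp_le_linear:
  fixes f :: "real \<Rightarrow> real"
  assumes "\<And>s. a \<le> s \<Longrightarrow> (f has_real_derivative f' s) (at s)"
    and "\<And>s. a \<le> s \<Longrightarrow> f' s \<le> e"
    and "a \<le> u"
  shows "f u \<le> f a + e * (u - a)"
proof -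
  have "- f a + (- e) * (u - a) \<le> - f u"
    by (rule DERIV_ge_imp_ge_linear[where f'="\<lambda>s. - f' s"]) (use assms in \<open>auto intro: DERIV_minus\<close>)
  then show ?thesis by simp
qed

lemma DERIV_nonpos_imp_le_left:
  fixes f :: "real \<Rightarrow> real"
  assumes "\<And>s. a \<le> s \<Longrightarrow> (f has_real_derivative f' s) (at s)"
    and "\<And>s. a \<le> s \<Longrightarrow> f' s \<le> 0"
    and "a \<le> u"
  shows "f u \<le> f a"
  using DERIV_le_imp_le_linear[OF assms] by simp

lemma DERIV_ge_pos_imp_eventually_ge:
  fixes f :: "real \<Rightarrow> real"
  assumes "\<And>s. a \<le> s \<Longrightarrow> (f has_real_derivative f' s) (at s)"
    and "\<And>s. a \<le> s \<Longrightarrow> e \<le> f' s" and "e > 0"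
  obtains b where "a \<le> b" and "\<And>u. b \<le> u \<Longrightarrow> c \<le> f u"
proof
  define b where "b = a + \<bar>c - f a\<bar> / e"
  show "a \<le> b" unfolding b_def using \<open>e > 0\<close> by simp
  fix u assume "b \<le> u"
  then have "\<bar>c - f a\<bar> \<le> e * (u - a)"
    unfolding b_def using \<open>e > 0\<close> by (simp add: field_simps)
  then show "c \<le> f u"
    using DERIV_ge_imp_ge_linear[OF assms(1,2) order_trans[OF \<open>a \<le> b\<close> \<open>b \<le> u\<close>]] by linarith
qed

lemma DERIV_le_neg_imp_eventually_le:
  fixes f :: "real \<Rightarrow> real"
  assumes "\<And>s. a \<le> s \<Longrightarrow> (f has_real_derivative f' s) (at s)"
    and "\<And>s. a \<le> s \<Longrightarrow> f' s \<le> - e" and "e > 0"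
  obtains b where "a \<le> b" and "\<And>u. b \<le> u \<Longrightarrow> f u \<le> c"
proof -
  have der: "\<And>s. a \<le> s \<Longrightarrow> ((\<lambda>s. - f s) has_real_derivative - f' s) (at s)"
    using assms(1) by (auto intro: DERIV_minus)
  have bound: "\<And>s. a \<le> s \<Longrightarrow> e \<le> - f' s"
    using assms(2) by force
  obtain b where "a \<le> b" "\<And>u. b \<le> u \<Longrightarrow> - c \<le> - f u"
    using DERIV_ge_pos_imp_eventually_ge[OF der bound assms(3), where c = "- c"] by blast
  then show ?thesis using that by auto
qed

lemma DERIV_le_mul_imp_le_exp:
  fixes f :: "real \<Rightarrow> real"
  assumes "\<And>s. a \<le> s \<Longrightarrow> (f has_real_derivative f' s) (at s)"
    and "\<And>s. a \<le> s \<Longrightarrow> f' s \<le> C * f s"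
    and "a \<le> u"
  shows "f u \<le> f a * exp (C * (u - a))"
proof -
  have "(\<lambda>s. f s * exp (- C * s)) u \<le> (\<lambda>s. f s * exp (- C * s)) a"
  proof (rule DERIV_nonpos_imp_nonincreasing[OF assms(3)])
    fix s assume "a \<le> s"
    have "(f' s - C * f s) * exp (- C * s) \<le> 0"
      using assms(2)[OF \<open>a \<le> s\<close>] by (simp add: mult_nonpos_nonneg)
    then show "\<exists>y. ((\<lambda>s. f s * exp (- C * s)) has_real_derivative y) (at s) \<and> y \<le> 0"
      using assms(1)[OF \<open>a \<le> s\<close>]
      by (intro exI conjI, auto intro!: derivative_eq_intros simp: algebra_simps)
  qed
  then have "f u * exp (- C * u) * exp (C * u) \<le> f a * exp (- C * a) * exp (C * u)"
    by (simp add: mult_right_mono)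
  then show ?thesis
    by (simp add: mult.assoc exp_add[symmetric] algebra_simps)
qed

text \<open>The weight \<open>exp ((\<bar>C\<bar> + 1) s)\<close> turns \<open>f' \<le> C \<bar>f\<bar>\<close> into a strictly negative derivative at
  every negative level.\<close>

lemma DERIV_le_abs_imp_neg_persists:
  fixes f :: "real \<Rightarrow> real"
  assumes "\<And>s. a \<le> s \<Longrightarrow> (f has_real_derivative f' s) (at s)"
    and "\<And>s. a \<le> s \<Longrightarrow> f' s \<le> C * \<bar>f s\<bar>"
    and "f a < 0" and "a \<le> b"
  shows "f b < 0"
proof -
  define D where "D = \<bar>C\<bar> + 1"
  define g where "g s = f s * exp (D * s)" for s
  have "g a < 0" unfolding g_def using assms(3) by (simp add: mult_neg_pos)
  have "g b \<le> g a / 2"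
  proof (rule DERIV_barrier_le[OF _ _ _ assms(4)])
    fix s assume "a \<le> s"
    show "(g has_real_derivative (f' s + D * f s) * exp (D * s)) (at s)"
      unfolding g_def using assms(1)[OF \<open>a \<le> s\<close>]
      by (auto intro!: derivative_eq_intros simp: algebra_simps)
    assume "g s = g a / 2"
    then have "g s < 0" using \<open>g a < 0\<close> by simp
    then have "f s < 0" unfolding g_def by (simp add: mult_less_0_iff)
    moreover have "f' s \<le> \<bar>C\<bar> * \<bar>f s\<bar>"
      using assms(2)[OF \<open>a \<le> s\<close>] mult_right_mono[OF abs_ge_self[of C] abs_ge_zero[of "f s"]]
      by linarith
    ultimately have "f' s + D * f s < 0"
      unfolding D_def by (simp add: algebra_simps abs_of_neg)
    then show "(f' s + D * f s) * exp (D * s) < 0" by (simp add: mult_neg_pos)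
  qed (use \<open>g a < 0\<close> in simp)
  with \<open>g a < 0\<close> have "g b < 0" by simp
  then show ?thesis unfolding g_def by (simp add: mult_less_0_iff)
qed

section \<open>Estimates for \<open>K\<close>\<close>

definition K_num :: "real \<Rightarrow> real \<Rightarrow> real \<Rightarrow> real" where
  "K_num h t m = 2 * (t\<^sup>2 + h\<^sup>2 * (1 + m\<^sup>2)) * t + (h\<^sup>2 - 1) * (1 + m\<^sup>2) * m"

definition K_den :: "real \<Rightarrow> real \<Rightarrow> real \<Rightarrow> real" where
  "K_den h t m = (1 + (t\<^sup>2 + m\<^sup>2)) * (h\<^sup>2 + (t\<^sup>2 + m\<^sup>2))"

lemma K_eq_num_div_den: "K h t m = K_num h t m / K_den h t m"
  unfolding K_def K_num_def K_den_def by simp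

lemma K_num_eq: "K_num h t m = 2 * t ^ 3 + (1 + m\<^sup>2) * (2 * h\<^sup>2 * t + (h\<^sup>2 - 1) * m)"
  unfolding K_num_def by (simp add: algebra_simps power2_eq_square power3_eq_cube)

lemma K_den_pos: "h > 0 \<Longrightarrow> 0 < K_den h t m"
  unfolding K_den_def by (intro mult_pos_pos) (auto intro: add_pos_nonneg)

lemma K_den_ge_sq: "h\<^sup>2 \<le> K_den h t m"
proof -
  have "1 * h\<^sup>2 \<le> (1 + (t\<^sup>2 + m\<^sup>2)) * (h\<^sup>2 + (t\<^sup>2 + m\<^sup>2))"
    by (intro mult_mono) auto
  then show ?thesis unfolding K_den_def by simp
qed

lemma K_den_ge: "(1 + m\<^sup>2) * (h\<^sup>2 + t\<^sup>2) \<le> K_den h t m"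
  unfolding K_den_def by (intro mult_mono) auto

lemma K_odd: "K h (- t) (- m) = - K h t m"
proof -
  have "K_num h (- t) (- m) = - K_num h t m" and "K_den h (- t) (- m) = K_den h t m"
    unfolding K_num_def K_den_def by (simp_all add: algebra_simps)
  then show ?thesis unfolding K_eq_num_div_den by simp
qed

lemma K_mul_eq_zero_on_axis:
  assumes "h > 0" and "K h t 0 * t = 0"
  shows "t = 0"
proof (rule ccontr)
  assume "t \<noteq> 0"
  then have "0 < 2 * (t\<^sup>2 + h\<^sup>2) * t\<^sup>2"
    using \<open>h > 0\<close> by (intro mult_pos_pos) (auto intro: add_pos_nonneg)
  also have "2 * (t\<^sup>2 + h\<^sup>2) * t\<^sup>2 = K_num h t 0 * t"
    unfolding K_num_def by (simp add: power2_eq_square)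
  finally have "0 < K_num h t 0 * t / K_den h t 0"
    using K_den_pos[OF \<open>h > 0\<close>] by simp
  also have "K_num h t 0 * t / K_den h t 0 = K h t 0 * t"
    by (simp add: K_eq_num_div_den)
  finally show False using assms(2) by simp
qed

lemma neg_K_num_mul_le: "- (K_num h t m * t) \<le> \<bar>h\<^sup>2 - 1\<bar> * (1 + m\<^sup>2) * \<bar>m\<bar> * \<bar>t\<bar>"
proof -
  have "K_num h t m * t = 2 * (t\<^sup>2 + h\<^sup>2 * (1 + m\<^sup>2)) * (t * t) + (h\<^sup>2 - 1) * (1 + m\<^sup>2) * m * t"
    unfolding K_num_def by (simp add: algebra_simps)
  moreover have "0 \<le> 2 * (t\<^sup>2 + h\<^sup>2 * (1 + m\<^sup>2)) * (t * t)" by simp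
  moreover have "\<bar>(h\<^sup>2 - 1) * (1 + m\<^sup>2) * m * t\<bar> = \<bar>h\<^sup>2 - 1\<bar> * (1 + m\<^sup>2) * \<bar>m\<bar> * \<bar>t\<bar>"
    by (simp add: abs_mult)
  ultimately show ?thesis by linarith
qed

lemma neg_K_mul_le_abs:
  assumes "h > 0"
  shows "- (K h t m * t) \<le> \<bar>h\<^sup>2 - 1\<bar> / (2 * h) * \<bar>m\<bar>"
proof -
  let ?c = "\<bar>h\<^sup>2 - 1\<bar> * \<bar>m\<bar>"
  have "- (K_num h t m * t) * (2 * h) \<le> (\<bar>h\<^sup>2 - 1\<bar> * (1 + m\<^sup>2) * \<bar>m\<bar> * \<bar>t\<bar>) * (2 * h)"
    using neg_K_num_mul_le assms by (intro mult_right_mono) auto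
  also have "\<dots> = ?c * ((1 + m\<^sup>2) * (2 * h * \<bar>t\<bar>))"
    by (simp add: algebra_simps)
  also have "\<dots> \<le> ?c * ((1 + m\<^sup>2) * (h\<^sup>2 + t\<^sup>2))"
    using zero_le_power2[of "h - \<bar>t\<bar>"]
    by (intro mult_left_mono) (auto simp: power2_eq_square algebra_simps)
  also have "\<dots> \<le> ?c * K_den h t m"
    by (intro mult_left_mono K_den_ge) simp
  finally show ?thesis
    using K_den_pos[OF assms, of t m] assms by (simp add: K_eq_num_div_den field_simps)
qed

lemma neg_K_mul_le:
  assumes "h > 0"
  shows "- (K h t m * t) \<le> \<bar>h\<^sup>2 - 1\<bar> / 2"
proof -
  have "2 * (\<bar>m\<bar> * \<bar>t\<bar>) \<le> t\<^sup>2 + m\<^sup>2"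
    using zero_le_power2[of "\<bar>m\<bar> - \<bar>t\<bar>"] by (simp add: power2_eq_square algebra_simps)
  then have "2 * (\<bar>m\<bar> * \<bar>t\<bar>) \<le> h\<^sup>2 + (t\<^sup>2 + m\<^sup>2)"
    using zero_le_power2[of h] by linarith
  then have "\<bar>h\<^sup>2 - 1\<bar> * ((1 + m\<^sup>2) * (2 * (\<bar>m\<bar> * \<bar>t\<bar>)))
      \<le> \<bar>h\<^sup>2 - 1\<bar> * ((1 + (t\<^sup>2 + m\<^sup>2)) * (h\<^sup>2 + (t\<^sup>2 + m\<^sup>2)))"
    by (intro mult_left_mono mult_mono) auto
  then have "- (K_num h t m * t) * 2 \<le> \<bar>h\<^sup>2 - 1\<bar> * K_den h t m"
    using neg_K_num_mul_le[of h t m] unfolding K_den_def by (simp add: algebra_simps)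
  then show ?thesis
    using K_den_pos[OF assms, of t m] by (simp add: K_eq_num_div_den field_simps)
qed

text \<open>\<open>rotation h \<tau> \<mu>\<close> is \<open>\<mu> \<tau>' - \<tau> \<mu>'\<close> along the flow, i.e. \<open>r\<^sup>2\<close> times the clockwise angular speed
  of \<open>(\<tau>, \<mu>)\<close>; in particular \<open>\<nu> = - \<tau> / \<mu>\<close> satisfies \<open>\<nu>' = - rotation h \<tau> \<mu> / \<mu>\<^sup>2\<close>.\<close>

definition rotation :: "real \<Rightarrow> real \<Rightarrow> real \<Rightarrow> real" where
  "rotation h t m = m + K h t m * (t\<^sup>2 + m\<^sup>2)"

definition rotation_num :: "real \<Rightarrow> real \<Rightarrow> real \<Rightarrow> real" where
  "rotation_num h t m =
    (t\<^sup>2 + m\<^sup>2) * (2 * t + m) * (t\<^sup>2 + h\<^sup>2 * m\<^sup>2) + 2 * h\<^sup>2 * (t\<^sup>2 + m\<^sup>2) * (t + m) + h\<^sup>2 * m"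

lemma rotation_eq_num_div_den:
  assumes "h > 0"
  shows "rotation h t m = rotation_num h t m / K_den h t m"
proof -
  have "rotation h t m * K_den h t m = m * K_den h t m + K_num h t m * (t\<^sup>2 + m\<^sup>2)"
    using K_den_pos[OF assms, of t m]
    unfolding rotation_def K_eq_num_div_den by (simp add: field_simps)
  also have "\<dots> = rotation_num h t m"
    unfolding K_den_def K_num_def rotation_num_def by (simp add: algebra_simps power2_eq_square)
  finally show ?thesis
    using K_den_pos[OF assms, of t m] by (simp add: field_simps)
qed

lemma rotation_neg:
  assumes "h > 0" and "m < 0" and "2 * t + m \<le> 0"
  shows "rotation h t m < 0"
proof -
  have "(t\<^sup>2 + m\<^sup>2) * (2 * t + m) * (t\<^sup>2 + h\<^sup>2 * m\<^sup>2) \<le> 0"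
    using assms by (intro mult_nonpos_nonneg mult_nonneg_nonpos) auto
  moreover have "2 * h\<^sup>2 * (t\<^sup>2 + m\<^sup>2) * (t + m) \<le> 0"
    using assms by (intro mult_nonneg_nonpos) auto
  moreover have "h\<^sup>2 * m < 0"
    using assms by (simp add: mult_pos_neg)
  ultimately have "rotation_num h t m < 0"
    unfolding rotation_num_def by linarith
  then show ?thesis
    unfolding rotation_eq_num_div_den[OF assms(1)]
    using K_den_pos[OF assms(1), of t m] by (simp add: divide_neg_pos)
qed

lemma rotation_pos:
  assumes "h > 0" and "m < 0" and "1 + h \<le> t" and "- m \<le> t"
  shows "rotation h t m > 0"
proof -
  have "h < (1 + h)\<^sup>2"
    using assms(1) by (simp add: power2_eq_square algebra_simps add_pos_nonneg)
  also have "\<dots> \<le> t\<^sup>2"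
    using assms by (intro power_mono) auto
  finally have "h * h < t\<^sup>2 * t\<^sup>2"
    using assms(1) by (intro mult_strict_mono) auto
  then have "(- m) * h\<^sup>2 < (- m) * (t\<^sup>2 * t\<^sup>2)"
    using assms(2) by (simp add: power2_eq_square)
  moreover have "t\<^sup>2 * (- m) * t\<^sup>2 \<le> (t\<^sup>2 + m\<^sup>2) * (2 * t + m) * (t\<^sup>2 + h\<^sup>2 * m\<^sup>2)"
    using assms by (intro mult_mono) auto
  moreover have "0 \<le> 2 * h\<^sup>2 * (t\<^sup>2 + m\<^sup>2) * (t + m)"
    using assms by simp
  ultimately have "rotation_num h t m > 0"
    unfolding rotation_num_def by (simp add: algebra_simps)
  then show ?thesis
    unfolding rotation_eq_num_div_den[OF assms(1)] using K_den_pos[OF assms(1), of t m] by simp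
qed

lemma rotation_num_ge:
  assumes "m > 0" and "\<delta> > 0" and "\<delta> * m \<le> 2 * t + m"
  shows "m * ((\<delta> * min 1 (h\<^sup>2)) * (t\<^sup>2 + m\<^sup>2)\<^sup>2 + h\<^sup>2 * (t\<^sup>2 + m\<^sup>2) + h\<^sup>2) \<le> rotation_num h t m"
proof -
  define r where "r = t\<^sup>2 + m\<^sup>2"
  define c where "c = min 1 (h\<^sup>2)"
  have "r \<ge> 0" and "0 \<le> c" "c \<le> 1" "c \<le> h\<^sup>2"
    unfolding r_def c_def by auto
  have "c * r \<le> t\<^sup>2 + h\<^sup>2 * m\<^sup>2"
    using mult_right_mono[OF \<open>c \<le> 1\<close>, of "t\<^sup>2"] mult_right_mono[OF \<open>c \<le> h\<^sup>2\<close>, of "m\<^sup>2"]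
    unfolding r_def by (simp add: algebra_simps)
  moreover have "m / 2 \<le> t + m" and "0 \<le> 2 * t + m"
    using assms mult_pos_pos[OF assms(2,1)] by linarith+
  ultimately have "r * (\<delta> * m) * (c * r) \<le> (t\<^sup>2 + m\<^sup>2) * (2 * t + m) * (t\<^sup>2 + h\<^sup>2 * m\<^sup>2)"
    and "2 * h\<^sup>2 * r * (m / 2) \<le> 2 * h\<^sup>2 * (t\<^sup>2 + m\<^sup>2) * (t + m)"
    unfolding r_def[symmetric] using assms \<open>r \<ge> 0\<close> \<open>0 \<le> c\<close>
    by (intro mult_mono mult_left_mono; simp)+
  then show ?thesis
    unfolding rotation_num_def r_def[symmetric] c_def[symmetric] by (simp add: algebra_simps power2_eq_square)
qed

lemma rotation_ge:
  assumes "h > 0" and "m > 0" and "\<delta> > 0" and "\<delta> * m \<le> 2 * t + m"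
  shows "min (\<delta> * min 1 (h\<^sup>2)) (h\<^sup>2 / (1 + h\<^sup>2)) * m \<le> rotation h t m"
proof -
  define r where "r = t\<^sup>2 + m\<^sup>2"
  define c where "c = min 1 (h\<^sup>2)"
  define g where "g = min (\<delta> * c) (h\<^sup>2 / (1 + h\<^sup>2))"
  have "r \<ge> 0" and "1 + h\<^sup>2 > 0"
    unfolding r_def by (simp_all add: add_pos_nonneg)
  have "g \<le> h\<^sup>2 / (1 + h\<^sup>2)" and "g \<le> \<delta> * c"
    unfolding g_def by auto
  moreover have "h\<^sup>2 / (1 + h\<^sup>2) \<le> 1"
    using \<open>1 + h\<^sup>2 > 0\<close> by (simp add: divide_le_eq)
  ultimately have "g \<le> 1" by linarith
  have "g * (1 + h\<^sup>2) \<le> h\<^sup>2"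
    using \<open>g \<le> h\<^sup>2 / (1 + h\<^sup>2)\<close> \<open>1 + h\<^sup>2 > 0\<close> by (simp add: field_simps)
  then have "g * r\<^sup>2 \<le> (\<delta> * c) * r\<^sup>2" and "(g * (1 + h\<^sup>2)) * r \<le> h\<^sup>2 * r"
    and "g * h\<^sup>2 \<le> 1 * h\<^sup>2"
    using \<open>r \<ge> 0\<close> \<open>g \<le> 1\<close> \<open>g \<le> \<delta> * c\<close> by (intro mult_right_mono; simp)+
  moreover have "K_den h t m = r\<^sup>2 + (1 + h\<^sup>2) * r + h\<^sup>2"
    unfolding K_den_def r_def by (simp add: algebra_simps power2_eq_square)
  ultimately have "g * K_den h t m \<le> (\<delta> * c) * r\<^sup>2 + h\<^sup>2 * r + h\<^sup>2"
    by (simp add: algebra_simps)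
  then have "m * (g * K_den h t m) \<le> rotation_num h t m"
    using rotation_num_ge[OF assms(2-4), of h] assms(2) unfolding r_def[symmetric] c_def[symmetric]
    by (meson less_imp_le mult_left_mono order_trans)
  then show ?thesis
    unfolding rotation_eq_num_div_den[OF assms(1)] g_def[symmetric] c_def[symmetric]
    using K_den_pos[OF assms(1), of t m] by (simp add: field_simps)
qed

lemma K_mul_pos:
  assumes "h > 0" and "m < 0" and "a > 0" and "h\<^sup>2 - 1 < 2 * h\<^sup>2 * a" and "- a * m \<le> t"
  shows "K h t m * t > 0"
proof -
  have "0 < - a * m" using assms by (simp add: mult_pos_neg)
  then have "t > 0" using assms by linarith
  have "(2 * h\<^sup>2 * a - (h\<^sup>2 - 1)) * (- m) > 0"
    using assms by (intro mult_pos_pos) auto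
  moreover have "2 * h\<^sup>2 * (- a * m) \<le> 2 * h\<^sup>2 * t"
    using assms by (intro mult_left_mono) auto
  moreover have "(2 * h\<^sup>2 * a - (h\<^sup>2 - 1)) * (- m) = 2 * h\<^sup>2 * (- a * m) + (h\<^sup>2 - 1) * m"
    by (simp add: algebra_simps)
  ultimately have "2 * h\<^sup>2 * t + (h\<^sup>2 - 1) * m > 0"
    by linarith
  then have "(1 + m\<^sup>2) * (2 * h\<^sup>2 * t + (h\<^sup>2 - 1) * m) > 0"
    by (intro mult_pos_pos) (auto intro: add_pos_nonneg)
  then have "K_num h t m > 0"
    unfolding K_num_eq using \<open>t > 0\<close> by (simp add: add_pos_pos)
  then show ?thesis
    unfolding K_eq_num_div_den using \<open>t > 0\<close> K_den_pos[OF assms(1), of t m] by simp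
qed

lemma K_num_ge_cube:
  assumes "m \<ge> 0" and "c * m \<le> t" and "\<bar>h\<^sup>2 - 1\<bar> \<le> h\<^sup>2 * c"
  shows "2 * t ^ 3 \<le> K_num h t m"
proof -
  have "- ((h\<^sup>2 - 1) * m) \<le> \<bar>h\<^sup>2 - 1\<bar> * m"
    using assms(1) by (metis abs_ge_minus_self minus_mult_left mult_right_mono)
  moreover have "\<bar>h\<^sup>2 - 1\<bar> * m \<le> h\<^sup>2 * (c * m)"
    using mult_right_mono[OF assms(3,1)] by (simp add: mult.assoc)
  moreover have "h\<^sup>2 * (c * m) \<le> h\<^sup>2 * t"
    using assms(2) by (simp add: mult_left_mono)
  moreover have "0 \<le> \<bar>h\<^sup>2 - 1\<bar> * m"
    using assms(1) by simp
  ultimately have "0 \<le> 2 * (h\<^sup>2 * t) + (h\<^sup>2 - 1) * m"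
    by linarith
  then have "0 \<le> (1 + m\<^sup>2) * (2 * h\<^sup>2 * t + (h\<^sup>2 - 1) * m)"
    by (simp add: mult.assoc)
  then show ?thesis unfolding K_num_eq by linarith
qed

lemma K_nonneg:
  assumes "h > 0" and "m \<ge> 0" and "c \<ge> 0" and "c * m \<le> t" and "\<bar>h\<^sup>2 - 1\<bar> \<le> h\<^sup>2 * c"
  shows "K h t m \<ge> 0"
proof -
  have "t \<ge> 0" using assms(2-4) by (meson mult_nonneg_nonneg order_trans)
  then have "0 \<le> K_num h t m"
    using K_num_ge_cube[OF assms(2,4,5)] by (meson order_trans zero_le_mult_iff zero_le_numeral zero_le_power)
  then show ?thesis
    unfolding K_eq_num_div_den using K_den_pos[OF assms(1), of t m] by simp
qed

lemma K_mul_ge: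
  assumes "h > 0" and "m \<ge> 0" and "c \<ge> 1" and "c * m \<le> t" and "\<bar>h\<^sup>2 - 1\<bar> \<le> h\<^sup>2 * c"
    and "t \<ge> 1"
  shows "2 / (3 * (h\<^sup>2 + 2)) \<le> K h t m * t"
proof -
  have "m \<le> t" using assms(2-4) by (meson mult_le_cancel_right1 order_trans not_le)
  then have "m\<^sup>2 \<le> t\<^sup>2" and "1 \<le> t\<^sup>2"
    using assms by (auto intro: power_mono simp: one_le_power)
  then have "K_den h t m \<le> (3 * t\<^sup>2) * ((h\<^sup>2 + 2) * t\<^sup>2)"
    unfolding K_den_def using mult_left_mono[OF \<open>1 \<le> t\<^sup>2\<close>, of "h\<^sup>2"]
    by (intro mult_mono) (auto simp: algebra_simps)
  also have "\<dots> = (3 * (h\<^sup>2 + 2)) * (t\<^sup>2 * t\<^sup>2)"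
    by (simp add: algebra_simps)
  finally have den: "K_den h t m \<le> (3 * (h\<^sup>2 + 2)) * (t\<^sup>2 * t\<^sup>2)" .
  have "0 < t\<^sup>2 * t\<^sup>2" using assms(6) by simp
  then have "2 / (3 * (h\<^sup>2 + 2)) = 2 * (t\<^sup>2 * t\<^sup>2) / ((3 * (h\<^sup>2 + 2)) * (t\<^sup>2 * t\<^sup>2))"
    by simp
  also have "\<dots> \<le> 2 * (t\<^sup>2 * t\<^sup>2) / K_den h t m"
    using den K_den_pos[OF assms(1), of t m] \<open>0 < t\<^sup>2 * t\<^sup>2\<close>
    by (intro divide_left_mono) (auto simp: add_nonneg_pos)
  also have "\<dots> \<le> K_num h t m * t / K_den h t m"
    using mult_right_mono[OF K_num_ge_cube[OF assms(2,4,5)], of t] assms(6) K_den_pos[OF assms(1), of t m]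
    by (intro divide_right_mono) (auto simp: power2_eq_square power3_eq_cube)
  finally show ?thesis by (simp add: K_eq_num_div_den)
qed

lemma neg_K_num_mul_le_near_origin:
  assumes "t\<^sup>2 + m\<^sup>2 \<le> 1"
  shows "- (K_num h t m * m) \<le> (2 + 4 * h\<^sup>2 + 2 * \<bar>h\<^sup>2 - 1\<bar>) * (t\<^sup>2 + m\<^sup>2)"
proof -
  define R where "R = t\<^sup>2 + m\<^sup>2"
  have "t\<^sup>2 \<le> 1" "m\<^sup>2 \<le> 1" "m\<^sup>2 \<le> R"
    using assms zero_le_power2[of t] zero_le_power2[of m] unfolding R_def by linarith+
  have "2 * (\<bar>t\<bar> * \<bar>m\<bar>) \<le> R"
    using zero_le_power2[of "\<bar>t\<bar> - \<bar>m\<bar>"] unfolding R_def by (simp add: power2_eq_square algebra_simps)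
  moreover have "t\<^sup>2 + h\<^sup>2 * (1 + m\<^sup>2) \<le> 1 + 2 * h\<^sup>2"
    using \<open>t\<^sup>2 \<le> 1\<close> mult_left_mono[of "1 + m\<^sup>2" 2 "h\<^sup>2"] \<open>m\<^sup>2 \<le> 1\<close> by simp
  ultimately have "(t\<^sup>2 + h\<^sup>2 * (1 + m\<^sup>2)) * (2 * (\<bar>t\<bar> * \<bar>m\<bar>)) \<le> (1 + 2 * h\<^sup>2) * R"
    by (intro mult_mono) auto
  moreover have "- (2 * (t\<^sup>2 + h\<^sup>2 * (1 + m\<^sup>2)) * (t * m))
      \<le> (t\<^sup>2 + h\<^sup>2 * (1 + m\<^sup>2)) * (2 * (\<bar>t\<bar> * \<bar>m\<bar>))"
  proof -
    have "- (t * m) \<le> \<bar>t\<bar> * \<bar>m\<bar>" by (simp add: abs_mult[symmetric])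
    then have "(t\<^sup>2 + h\<^sup>2 * (1 + m\<^sup>2)) * (- (t * m)) \<le> (t\<^sup>2 + h\<^sup>2 * (1 + m\<^sup>2)) * (\<bar>t\<bar> * \<bar>m\<bar>)"
      by (intro mult_left_mono) auto
    then show ?thesis by (simp add: algebra_simps)
  qed
  moreover have "- ((h\<^sup>2 - 1) * (1 + m\<^sup>2) * m\<^sup>2) \<le> \<bar>h\<^sup>2 - 1\<bar> * ((1 + m\<^sup>2) * m\<^sup>2)"
    using mult_right_mono[OF abs_ge_minus_self[of "h\<^sup>2 - 1"], of "(1 + m\<^sup>2) * m\<^sup>2"]
    by (simp add: mult.assoc left_diff_distrib)
  moreover have "\<bar>h\<^sup>2 - 1\<bar> * ((1 + m\<^sup>2) * m\<^sup>2) \<le> \<bar>h\<^sup>2 - 1\<bar> * (2 * R)"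
    using \<open>m\<^sup>2 \<le> 1\<close> \<open>m\<^sup>2 \<le> R\<close> by (intro mult_left_mono mult_mono) auto
  moreover have "K_num h t m * m = 2 * (t\<^sup>2 + h\<^sup>2 * (1 + m\<^sup>2)) * (t * m) + (h\<^sup>2 - 1) * (1 + m\<^sup>2) * m\<^sup>2"
    unfolding K_num_def by (simp add: algebra_simps power2_eq_square)
  ultimately have "- (K_num h t m * m) \<le> (1 + 2 * h\<^sup>2) * R + \<bar>h\<^sup>2 - 1\<bar> * (2 * R)"
    by linarith
  also have "\<dots> \<le> (2 + 4 * h\<^sup>2 + 2 * \<bar>h\<^sup>2 - 1\<bar>) * R"
    unfolding R_def by (simp add: algebra_simps)
  finally show ?thesis unfolding R_def .
qed

lemma tau_speed_near_origin:
  assumes "h > 0"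
  obtains \<rho> where "\<rho> > 0" and "\<And>t m. t\<^sup>2 + m\<^sup>2 \<le> \<rho> \<Longrightarrow> 1 / 2 \<le> 1 + K h t m * m"
proof
  define E where "E = 2 + 4 * h\<^sup>2 + 2 * \<bar>h\<^sup>2 - 1\<bar>"
  have "E \<ge> 2" and "E \<ge> h\<^sup>2" unfolding E_def by auto
  define \<rho> where "\<rho> = h\<^sup>2 / (2 * E)"
  show "\<rho> > 0" unfolding \<rho>_def using assms \<open>E \<ge> 2\<close> by simp
  fix t m assume small: "t\<^sup>2 + m\<^sup>2 \<le> \<rho>"
  have "\<rho> \<le> 1" unfolding \<rho>_def using \<open>E \<ge> h\<^sup>2\<close> \<open>E \<ge> 2\<close> by (simp add: field_simps)
  have "- (K_num h t m * m) \<le> E * (t\<^sup>2 + m\<^sup>2)"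
    unfolding E_def using order_trans[OF small \<open>\<rho> \<le> 1\<close>] by (rule neg_K_num_mul_le_near_origin)
  also have "\<dots> \<le> E * \<rho>"
    using small \<open>E \<ge> 2\<close> by (intro mult_left_mono) auto
  also have "\<dots> \<le> K_den h t m / 2"
    unfolding \<rho>_def using \<open>E \<ge> 2\<close> K_den_ge_sq[of h t m] by simp
  finally show "1 / 2 \<le> 1 + K h t m * m"
    unfolding K_eq_num_div_den using K_den_pos[OF assms, of t m] by (simp add: field_simps)
qed

section \<open>The flow\<close>

locale K_flow =
  fixes h :: real and \<tau> \<mu> :: "real \<Rightarrow> real"
  assumes h_pos: "h > 0"
    and tau_deriv: "\<And>s. (\<tau> has_real_derivative (1 + K h (\<tau> s) (\<mu> s) * \<mu> s)) (at s)"
    and mu_deriv: "\<And>s. (\<mu> has_real_derivative (- K h (\<tau> s) (\<mu> s) * \<tau> s)) (at s)"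
begin

definition \<nu> :: "real \<Rightarrow> real" where
  "\<nu> s = - \<tau> s / \<mu> s"

lemma nu_deriv:
  assumes "\<mu> s \<noteq> 0"
  shows "(\<nu> has_real_derivative - rotation h (\<tau> s) (\<mu> s) / (\<mu> s)\<^sup>2) (at s)"
proof -
  have "((\<lambda>s. - \<tau> s / \<mu> s) has_real_derivative
      (- (1 + K h (\<tau> s) (\<mu> s) * \<mu> s) * \<mu> s - - \<tau> s * - (K h (\<tau> s) (\<mu> s) * \<tau> s)) / (\<mu> s * \<mu> s)) (at s)"
    using DERIV_divide[OF DERIV_minus[OF tau_deriv] mu_deriv assms] by simp
  moreover have "(- (1 + K h (\<tau> s) (\<mu> s) * \<mu> s) * \<mu> s - - \<tau> s * - (K h (\<tau> s) (\<mu> s) * \<tau> s))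
      / (\<mu> s * \<mu> s) = - rotation h (\<tau> s) (\<mu> s) / (\<mu> s)\<^sup>2"
    unfolding rotation_def by (simp add: power2_eq_square algebra_simps)
  ultimately show ?thesis unfolding \<nu>_def[abs_def] by simp
qed

lemma nu_ge_iff_neg: "\<mu> s < 0 \<Longrightarrow> c \<le> \<nu> s \<longleftrightarrow> - c * \<mu> s \<le> \<tau> s"
  unfolding \<nu>_def by (auto simp: field_simps)

lemma nu_le_iff_pos: "\<mu> s > 0 \<Longrightarrow> \<nu> s \<le> c \<longleftrightarrow> - c * \<mu> s \<le> \<tau> s"
  unfolding \<nu>_def by (auto simp: field_simps)

lemma nu_ge_iff_pos: "\<mu> s > 0 \<Longrightarrow> c \<le> \<nu> s \<longleftrightarrow> \<tau> s \<le> - c * \<mu> s"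
  unfolding \<nu>_def by (auto simp: field_simps)

lemma mu_neg_persists:
  assumes "\<mu> a < 0" and "a \<le> b"
  shows "\<mu> b < 0"
  using neg_K_mul_le_abs[OF h_pos]
  by (intro DERIV_le_abs_imp_neg_persists[OF mu_deriv _ assms, where C = "\<bar>h\<^sup>2 - 1\<bar> / (2 * h)"]) simp

lemma mu_pos_if_nonneg:
  assumes nonneg: "\<And>s. \<mu> s \<ge> 0"
  shows "\<mu> s > 0"
proof (rule ccontr)
  assume "\<not> \<mu> s > 0"
  with nonneg[of s] have "\<mu> s = 0" by linarith
  have growth: "- K h (\<tau> v) (\<mu> v) * \<tau> v \<le> \<bar>h\<^sup>2 - 1\<bar> / (2 * h) * \<mu> v" for v
    using neg_K_mul_le_abs[OF h_pos, of "\<tau> v" "\<mu> v"] nonneg[of v] by simp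
  have zero: "\<mu> u = 0" if "s \<le> u" for u
    using DERIV_le_mul_imp_le_exp[OF mu_deriv growth that] \<open>\<mu> s = 0\<close> nonneg[of u] by simp
  have tau_zero: "\<tau> u = 0" if "s < u" for u
  proof (rule K_mul_eq_zero_on_axis[OF h_pos])
    have "- K h (\<tau> u) (\<mu> u) * \<tau> u = 0"
    proof (rule DERIV_local_const[OF mu_deriv[of u], of "u - s"])
      show "\<forall>y. \<bar>u - y\<bar> < u - s \<longrightarrow> \<mu> u = \<mu> y"
        using that zero by (simp add: abs_less_iff)
    qed (use that in simp)
    then show "K h (\<tau> u) 0 * \<tau> u = 0"
      using zero[of u] that by simp
  qed
  have "1 + K h (\<tau> (s + 1)) (\<mu> (s + 1)) * \<mu> (s + 1) = 0"
  proof (rule DERIV_local_const[OF tau_deriv[of "s + 1"], of 1])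
    show "\<forall>y. \<bar>s + 1 - y\<bar> < 1 \<longrightarrow> \<tau> (s + 1) = \<tau> y"
      using tau_zero by (simp add: abs_less_iff)
  qed simp
  with zero[of "s + 1"] show False by simp
qed

lemma tau_eq_nu: "\<mu> s \<noteq> 0 \<Longrightarrow> \<tau> s = - \<nu> s * \<mu> s"
  unfolding \<nu>_def by simp

lemma nu_lower_bound:
  assumes "\<mu> b < 0" and "b \<le> s"
  shows "min (\<nu> b) (1 / 2) \<le> \<nu> s"
proof (rule DERIV_barrier_ge[OF _ _ _ assms(2)])
  fix u assume "b \<le> u"
  then have "\<mu> u < 0" using mu_neg_persists assms(1) by blast
  show "(\<nu> has_real_derivative - rotation h (\<tau> u) (\<mu> u) / (\<mu> u)\<^sup>2) (at u)"
    by (rule nu_deriv) (use \<open>\<mu> u < 0\<close> in simp)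
  assume "\<nu> u = min (\<nu> b) (1 / 2)"
  then have "2 * \<tau> u + \<mu> u = (1 - 2 * min (\<nu> b) (1 / 2)) * \<mu> u"
    using tau_eq_nu[of u] \<open>\<mu> u < 0\<close> by (simp add: algebra_simps)
  also have "\<dots> \<le> 0"
    using \<open>\<mu> u < 0\<close> by (intro mult_nonneg_nonpos) auto
  finally have "rotation h (\<tau> u) (\<mu> u) < 0"
    using rotation_neg[OF h_pos \<open>\<mu> u < 0\<close>] by blast
  then show "- rotation h (\<tau> u) (\<mu> u) / (\<mu> u)\<^sup>2 > 0"
    using \<open>\<mu> u < 0\<close> by (simp add: divide_neg_pos)
qed simp

lemma mu_nonincreasing_if_nu_ge_half:
  assumes "\<mu> b < 0" and "\<And>s. b \<le> s \<Longrightarrow> 1 / 2 \<le> \<nu> s" and "b \<le> s"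
  shows "\<mu> s \<le> \<mu> b"
proof (rule DERIV_nonpos_imp_le_left[OF mu_deriv _ assms(3)])
  fix u assume "b \<le> u"
  then have "\<mu> u < 0" using mu_neg_persists assms(1) by blast
  moreover have "- (1 / 2) * \<mu> u \<le> \<tau> u"
    using nu_ge_iff_neg[OF \<open>\<mu> u < 0\<close>] assms(2) \<open>b \<le> u\<close> by blast
  ultimately have "K h (\<tau> u) (\<mu> u) * \<tau> u > 0"
    by (intro K_mul_pos[OF h_pos, of _ "1 / 2"]) simp_all
  then show "- K h (\<tau> u) (\<mu> u) * \<tau> u \<le> 0" by simp
qed

lemma nu_upper_bound:
  assumes "\<mu> b < 0" and "\<And>s. b \<le> s \<Longrightarrow> 1 / 2 \<le> \<nu> s" and "b \<le> s"
  shows "\<nu> s \<le> max (\<nu> b) (max 1 ((1 + h) / - \<mu> b))"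
proof (rule DERIV_barrier_le[OF _ _ _ assms(3)])
  define c where "c = max (\<nu> b) (max 1 ((1 + h) / - \<mu> b))"
  fix u assume "b \<le> u"
  then have "\<mu> u \<le> \<mu> b" using mu_nonincreasing_if_nu_ge_half[OF assms(1,2)] by blast
  then have "\<mu> u < 0" using assms(1) by linarith
  show "(\<nu> has_real_derivative - rotation h (\<tau> u) (\<mu> u) / (\<mu> u)\<^sup>2) (at u)"
    by (rule nu_deriv) (use \<open>\<mu> u < 0\<close> in simp)
  assume "\<nu> u = c"
  then have tau: "\<tau> u = c * (- \<mu> u)"
    using tau_eq_nu[of u] \<open>\<mu> u < 0\<close> by simp
  have "(1 + h) / - \<mu> b \<le> c" unfolding c_def by simp
  then have "1 + h \<le> c * - \<mu> b" using pos_divide_le_eq[of "- \<mu> b"] assms(1) by simp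
  also have "\<dots> \<le> \<tau> u"
    unfolding tau using \<open>\<mu> u \<le> \<mu> b\<close> by (intro mult_left_mono) (auto simp: c_def)
  finally have "1 + h \<le> \<tau> u" .
  moreover have "- \<mu> u \<le> \<tau> u"
    unfolding tau using mult_right_mono[of 1 c "- \<mu> u"] \<open>\<mu> u < 0\<close> by (simp add: c_def)
  ultimately have "rotation h (\<tau> u) (\<mu> u) > 0"
    using rotation_pos[OF h_pos \<open>\<mu> u < 0\<close>] by blast
  then show "- rotation h (\<tau> u) (\<mu> u) / (\<mu> u)\<^sup>2 < 0"
    using \<open>\<mu> u < 0\<close> by simp
qed simp

lemma eventually_bounded_if_mu_neg:
  assumes "\<mu> b < 0"
  obtains B l u where "\<And>s. B \<le> s \<Longrightarrow> \<mu> s < 0 \<and> l \<le> \<nu> s \<and> \<nu> s \<le> u"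
proof (cases "\<exists>c\<ge>b. 1 / 2 \<le> \<nu> c")
  case True
  then obtain c where "b \<le> c" and "1 / 2 \<le> \<nu> c" by blast
  then have "\<mu> c < 0" using mu_neg_persists assms by blast
  have half: "1 / 2 \<le> \<nu> s" if "c \<le> s" for s
    using nu_lower_bound[OF \<open>\<mu> c < 0\<close> that] \<open>1 / 2 \<le> \<nu> c\<close> by linarith
  show ?thesis
  proof (rule that)
    fix s assume "c \<le> s"
    then show "\<mu> s < 0 \<and> 1 / 2 \<le> \<nu> s \<and> \<nu> s \<le> max (\<nu> c) (max 1 ((1 + h) / - \<mu> c))"
      using mu_neg_persists[OF \<open>\<mu> c < 0\<close>] half nu_upper_bound[OF \<open>\<mu> c < 0\<close> half] by blast
  qed
next
  case False
  show ?thesis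
  proof (rule that)
    fix s assume "b \<le> s"
    then show "\<mu> s < 0 \<and> min (\<nu> b) (1 / 2) \<le> \<nu> s \<and> \<nu> s \<le> 1 / 2"
      using mu_neg_persists[OF assms] nu_lower_bound[OF assms] False by force
  qed
qed

lemma radius_deriv: "((\<lambda>s. (\<tau> s)\<^sup>2 + (\<mu> s)\<^sup>2) has_real_derivative 2 * \<tau> s) (at s)"
proof -
  have "((\<lambda>s. (\<tau> s)\<^sup>2 + (\<mu> s)\<^sup>2) has_real_derivative
      2 * \<tau> s * (1 + K h (\<tau> s) (\<mu> s) * \<mu> s) + 2 * \<mu> s * (- K h (\<tau> s) (\<mu> s) * \<tau> s)) (at s)"
    by (auto intro!: derivative_eq_intros tau_deriv mu_deriv)
  then show ?thesis by (simp add: algebra_simps)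
qed

text \<open>Since \<open>(\<tau>\<^sup>2 + \<mu>\<^sup>2)' = 2 \<tau> < 0\<close>, an orbit entering the disc where \<open>\<tau>' \<ge> 1/2\<close> never
  leaves it, and then \<open>\<tau>\<close> would become positive.\<close>

lemma radius_bounded_below_if_tau_neg:
  assumes tau_neg: "\<And>s. \<tau> s < 0"
  obtains \<rho> where "\<rho> > 0" and "\<And>s. \<rho> < (\<tau> s)\<^sup>2 + (\<mu> s)\<^sup>2"
proof -
  obtain \<rho> where "\<rho> > 0" and near: "\<And>t m. t\<^sup>2 + m\<^sup>2 \<le> \<rho> \<Longrightarrow> 1 / 2 \<le> 1 + K h t m * m"
    using tau_speed_near_origin[OF h_pos] by blast
  have "\<rho> < (\<tau> a)\<^sup>2 + (\<mu> a)\<^sup>2" for a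
  proof (rule ccontr)
    assume "\<not> \<rho> < (\<tau> a)\<^sup>2 + (\<mu> a)\<^sup>2"
    have "(\<tau> s)\<^sup>2 + (\<mu> s)\<^sup>2 \<le> (\<tau> a)\<^sup>2 + (\<mu> a)\<^sup>2" if "a \<le> s" for s
      by (rule DERIV_nonpos_imp_le_left[OF radius_deriv _ that]) (use tau_neg in \<open>simp add: less_imp_le\<close>)
    then have speed: "1 / 2 \<le> 1 + K h (\<tau> s) (\<mu> s) * \<mu> s" if "a \<le> s" for s
      using near that \<open>\<not> \<rho> < (\<tau> a)\<^sup>2 + (\<mu> a)\<^sup>2\<close> by force
    have "(1 :: real) / 2 > 0" by simp
    from DERIV_ge_pos_imp_eventually_ge[OF tau_deriv speed this, where c = 0]
    obtain b where "\<And>u. b \<le> u \<Longrightarrow> 0 \<le> \<tau> u" by blast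
    then show False using tau_neg[of b] by fastforce
  qed
  with \<open>\<rho> > 0\<close> show ?thesis using that by blast
qed

lemma nu_ge_half_impossible:
  assumes pos: "\<And>s. \<mu> s > 0" and ge: "\<And>s. 1 / 2 \<le> \<nu> s"
  shows False
proof -
  have tau_le: "\<tau> s \<le> - (1 / 2) * \<mu> s" for s
    using nu_ge_iff_pos[OF pos] ge by blast
  have tau_neg: "\<tau> s < 0" for s
    using tau_le[of s] pos[of s] by linarith
  obtain \<rho> where "\<rho> > 0" and far: "\<And>s. \<rho> < (\<tau> s)\<^sup>2 + (\<mu> s)\<^sup>2"
    using radius_bounded_below_if_tau_neg[OF tau_neg] by blast
  define e where "e = sqrt (\<rho> / 5)"
  have "e > 0" unfolding e_def using \<open>\<rho> > 0\<close> by simp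
  have "\<tau> s \<le> - e" for s
  proof -
    have "(\<mu> s)\<^sup>2 \<le> (- 2 * \<tau> s)\<^sup>2"
      using tau_le[of s] pos[of s] by (intro power_mono) auto
    then have "\<rho> < 5 * (\<tau> s)\<^sup>2"
      using far[of s] by (simp add: power_mult_distrib)
    then have "e < sqrt ((\<tau> s)\<^sup>2)"
      unfolding e_def by (intro real_sqrt_less_mono) simp
    then show ?thesis using tau_neg[of s] by simp
  qed
  then have "2 * \<tau> s \<le> - (2 * e)" for s by fastforce
  moreover have "2 * e > 0" using \<open>e > 0\<close> by simp
  ultimately obtain b where "(\<tau> b)\<^sup>2 + (\<mu> b)\<^sup>2 \<le> 0"
    using DERIV_le_neg_imp_eventually_le[OF radius_deriv, where a = 0 and c = 0] by blast
  with far[of b] \<open>\<rho> > 0\<close> show False by linarith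
qed

lemma rotation_lower_bound_if_nu_below_half:
  assumes pos: "\<And>s. \<mu> s > 0" and "\<nu> b < 1 / 2"
  obtains \<gamma> where "\<gamma> > 0" and "\<And>s. b \<le> s \<Longrightarrow> \<gamma> * \<mu> s \<le> rotation h (\<tau> s) (\<mu> s)"
proof
  define \<delta> where "\<delta> = 1 - 2 * \<nu> b"
  define \<gamma> where "\<gamma> = min (\<delta> * min 1 (h\<^sup>2)) (h\<^sup>2 / (1 + h\<^sup>2))"
  have "\<delta> > 0" unfolding \<delta>_def using assms(2) by simp
  then show "\<gamma> > 0" unfolding \<gamma>_def using h_pos by (simp add: add_pos_nonneg)
  have key: "\<gamma> * \<mu> s \<le> rotation h (\<tau> s) (\<mu> s)" if "\<nu> s \<le> \<nu> b" for s
  proof -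
    have "- \<nu> b * \<mu> s \<le> \<tau> s" using nu_le_iff_pos[OF pos] that by blast
    then have "\<delta> * \<mu> s \<le> 2 * \<tau> s + \<mu> s" unfolding \<delta>_def by (simp add: algebra_simps)
    from rotation_ge[OF h_pos pos \<open>\<delta> > 0\<close> this] show ?thesis unfolding \<gamma>_def .
  qed
  fix s assume "b \<le> s"
  have "\<nu> s \<le> \<nu> b"
  proof (rule DERIV_barrier_le[OF _ _ _ \<open>b \<le> s\<close>])
    fix u
    show "(\<nu> has_real_derivative - rotation h (\<tau> u) (\<mu> u) / (\<mu> u)\<^sup>2) (at u)"
      by (rule nu_deriv) (use pos[of u] in simp)
    assume "\<nu> u = \<nu> b"
    moreover have "0 < \<gamma> * \<mu> u" using \<open>\<gamma> > 0\<close> pos[of u] by simp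
    ultimately have "rotation h (\<tau> u) (\<mu> u) > 0"
      using key[of u] by simp
    then show "- rotation h (\<tau> u) (\<mu> u) / (\<mu> u)\<^sup>2 < 0"
      using pos[of u] by simp
  qed simp
  then show "\<gamma> * \<mu> s \<le> rotation h (\<tau> s) (\<mu> s)" by (rule key)
qed

lemma nu_deriv_le:
  assumes "\<mu> s > 0" and "\<gamma> * \<mu> s \<le> rotation h (\<tau> s) (\<mu> s)"
  shows "- rotation h (\<tau> s) (\<mu> s) / (\<mu> s)\<^sup>2 \<le> - \<gamma> / \<mu> s"
proof -
  have "- rotation h (\<tau> s) (\<mu> s) / (\<mu> s)\<^sup>2 \<le> - (\<gamma> * \<mu> s) / (\<mu> s)\<^sup>2"
    using assms by (intro divide_right_mono) auto
  also have "\<dots> = - \<gamma> / \<mu> s"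
    using assms(1) by (simp add: power2_eq_square)
  finally show ?thesis .
qed

text \<open>Once \<open>\<nu> \<le> -c\<close>, the point lies in the sector \<open>\<tau> \<ge> c \<mu>\<close> where \<open>K \<ge> 0\<close>; hence \<open>\<tau>' \<ge> 1\<close>,
  then \<open>K \<tau>\<close> is bounded below and \<open>\<mu>' = - K \<tau>\<close> drives \<open>\<mu>\<close> to zero.\<close>

lemma nu_le_neg_impossible:
  assumes pos: "\<And>s. \<mu> s > 0" and "c \<ge> 1" and "\<bar>h\<^sup>2 - 1\<bar> \<le> h\<^sup>2 * c"
    and le: "\<And>s. a \<le> s \<Longrightarrow> \<nu> s \<le> - c"
  shows False
proof -
  have sector: "c * \<mu> s \<le> \<tau> s" if "a \<le> s" for s
    using nu_le_iff_pos[OF pos] le[OF that] by force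
  have "1 \<le> 1 + K h (\<tau> s) (\<mu> s) * \<mu> s" if "a \<le> s" for s
    using K_nonneg[OF h_pos _ _ sector[OF that] assms(3)] pos[of s] \<open>c \<ge> 1\<close> by simp
  moreover have "(1 :: real) > 0" by simp
  ultimately obtain b where "a \<le> b" and tau_ge: "\<And>u. b \<le> u \<Longrightarrow> 1 \<le> \<tau> u"
    using DERIV_ge_pos_imp_eventually_ge[OF tau_deriv, where c = 1] by blast
  have "- K h (\<tau> s) (\<mu> s) * \<tau> s \<le> - (2 / (3 * (h\<^sup>2 + 2)))" if "b \<le> s" for s
    using K_mul_ge[OF h_pos _ \<open>c \<ge> 1\<close> sector assms(3) tau_ge[OF that]] pos[of s] \<open>a \<le> b\<close> that
    by simp
  moreover have "2 / (3 * (h\<^sup>2 + 2)) > (0 :: real)" by (simp add: add_nonneg_pos)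
  ultimately obtain b' where "\<And>u. b' \<le> u \<Longrightarrow> \<mu> u \<le> 0"
    using DERIV_le_neg_imp_eventually_le[OF mu_deriv, where c = 0] by blast
  then show False using pos[of b'] by force
qed

text \<open>With \<open>\<nu>' \<le> - \<gamma> / \<mu>\<close> and \<open>\<mu>' / \<mu> \<le> M / \<mu>\<close>, the function \<open>\<nu> + (\<gamma> / M) ln \<mu>\<close> is
  nonincreasing, so a lower bound for \<open>\<nu>\<close> gives an upper bound for \<open>\<mu>\<close>.\<close>

lemma mu_bounded_if_nu_bounded_below:
  assumes pos: "\<And>s. \<mu> s > 0" and "\<gamma> > 0"
    and rot: "\<And>s. b \<le> s \<Longrightarrow> \<gamma> * \<mu> s \<le> rotation h (\<tau> s) (\<mu> s)"
    and lower: "\<And>s. b \<le> s \<Longrightarrow> - c < \<nu> s"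
  obtains U where "U > 0" and "\<And>s. b \<le> s \<Longrightarrow> \<mu> s \<le> U"
proof
  define M where "M = \<bar>h\<^sup>2 - 1\<bar> / 2 + 1"
  have "M > 0" unfolding M_def by (simp add: add_nonneg_pos)
  define F where "F s = \<nu> s + \<gamma> / M * ln (\<mu> s)" for s
  have F_le: "F s \<le> F b" if "b \<le> s" for s
  proof (rule DERIV_nonpos_imp_le_left[OF _ _ that])
    fix u assume "b \<le> u"
    show "(F has_real_derivative
        - rotation h (\<tau> u) (\<mu> u) / (\<mu> u)\<^sup>2 + \<gamma> / M * (- K h (\<tau> u) (\<mu> u) * \<tau> u / \<mu> u)) (at u)"
      unfolding F_def[abs_def] using pos[of u] \<open>M > 0\<close>
      by (auto intro!: derivative_eq_intros nu_deriv mu_deriv simp: field_simps)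
    have "- K h (\<tau> u) (\<mu> u) * \<tau> u / \<mu> u \<le> M / \<mu> u"
      using neg_K_mul_le[OF h_pos, of "\<tau> u" "\<mu> u"] pos[of u]
      by (intro divide_right_mono) (auto simp: M_def)
    then have "\<gamma> / M * (- K h (\<tau> u) (\<mu> u) * \<tau> u / \<mu> u) \<le> \<gamma> / M * (M / \<mu> u)"
      by (rule mult_left_mono) (use \<open>\<gamma> > 0\<close> \<open>M > 0\<close> in simp)
    also have "\<dots> = \<gamma> / \<mu> u"
      using \<open>M > 0\<close> by simp
    finally show "- rotation h (\<tau> u) (\<mu> u) / (\<mu> u)\<^sup>2 + \<gamma> / M * (- K h (\<tau> u) (\<mu> u) * \<tau> u / \<mu> u) \<le> 0"
      using nu_deriv_le[OF pos rot[OF \<open>b \<le> u\<close>]] by simp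
  qed
  show "exp ((F b + c) * M / \<gamma>) > 0" by simp
  fix s assume "b \<le> s"
  have "\<gamma> / M * ln (\<mu> s) < F b + c"
    using F_le[OF \<open>b \<le> s\<close>] lower[OF \<open>b \<le> s\<close>] unfolding F_def by simp
  then have "ln (\<mu> s) < (F b + c) * M / \<gamma>"
    using \<open>\<gamma> > 0\<close> \<open>M > 0\<close> by (simp add: field_simps)
  then have "exp (ln (\<mu> s)) \<le> exp ((F b + c) * M / \<gamma>)"
    by simp
  then show "\<mu> s \<le> exp ((F b + c) * M / \<gamma>)" using pos[of s] by simp
qed

lemma nu_bounded_below_impossible:
  assumes pos: "\<And>s. \<mu> s > 0" and "\<gamma> > 0"
    and rot: "\<And>s. b \<le> s \<Longrightarrow> \<gamma> * \<mu> s \<le> rotation h (\<tau> s) (\<mu> s)"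
    and lower: "\<And>s. b \<le> s \<Longrightarrow> - c < \<nu> s"
  shows False
proof -
  obtain U where "U > 0" and mu_le: "\<And>s. b \<le> s \<Longrightarrow> \<mu> s \<le> U"
    using mu_bounded_if_nu_bounded_below[OF assms] by blast
  have bound: "- rotation h (\<tau> s) (\<mu> s) / (\<mu> s)\<^sup>2 \<le> - (\<gamma> / U)" if "b \<le> s" for s
  proof -
    have "\<gamma> / U \<le> \<gamma> / \<mu> s"
      using mu_le[OF that] \<open>\<gamma> > 0\<close> \<open>U > 0\<close> pos[of s] by (intro divide_left_mono) auto
    with nu_deriv_le[OF pos rot[OF that]] show ?thesis by linarith
  qed
  have "\<gamma> / U > 0" using \<open>\<gamma> > 0\<close> \<open>U > 0\<close> by simp
  have nu_deriv': "(\<nu> has_real_derivative - rotation h (\<tau> s) (\<mu> s) / (\<mu> s)\<^sup>2) (at s)" for s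
    by (rule nu_deriv) (use pos[of s] in simp)
  obtain b' where "b \<le> b'" and "\<And>u. b' \<le> u \<Longrightarrow> \<nu> u \<le> - c"
    using DERIV_le_neg_imp_eventually_le[OF nu_deriv' bound \<open>\<gamma> / U > 0\<close>, where c = "- c"] by blast
  then show False using lower[of b'] by force
qed

lemma nu_below_half_impossible:
  assumes pos: "\<And>s. \<mu> s > 0" and "\<nu> b < 1 / 2"
  shows False
proof -
  obtain \<gamma> where "\<gamma> > 0" and rot: "\<And>s. b \<le> s \<Longrightarrow> \<gamma> * \<mu> s \<le> rotation h (\<tau> s) (\<mu> s)"
    using rotation_lower_bound_if_nu_below_half[OF pos assms(2)] by blast
  define c where "c = max 1 (\<bar>h\<^sup>2 - 1\<bar> / h\<^sup>2)"
  have "c \<ge> 1" unfolding c_def by simp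
  have "\<bar>h\<^sup>2 - 1\<bar> = h\<^sup>2 * (\<bar>h\<^sup>2 - 1\<bar> / h\<^sup>2)" using h_pos by simp
  also have "\<dots> \<le> h\<^sup>2 * c" unfolding c_def by (intro mult_left_mono) auto
  finally have "\<bar>h\<^sup>2 - 1\<bar> \<le> h\<^sup>2 * c" .
  show False
  proof (cases "\<exists>a\<ge>b. \<nu> a \<le> - c")
    case True
    then obtain a where "b \<le> a" and "\<nu> a \<le> - c" by blast
    have "\<nu> s \<le> \<nu> a" if "a \<le> s" for s
    proof (rule DERIV_nonpos_imp_le_left[OF _ _ that])
      fix u assume "a \<le> u"
      show "(\<nu> has_real_derivative - rotation h (\<tau> u) (\<mu> u) / (\<mu> u)\<^sup>2) (at u)"
        by (rule nu_deriv) (use pos[of u] in simp)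
      have "- \<gamma> / \<mu> u \<le> 0" using \<open>\<gamma> > 0\<close> pos[of u] by simp
      with nu_deriv_le[OF pos rot] \<open>b \<le> a\<close> \<open>a \<le> u\<close>
      show "- rotation h (\<tau> u) (\<mu> u) / (\<mu> u)\<^sup>2 \<le> 0"
        by (meson order_trans)
    qed
    with \<open>\<nu> a \<le> - c\<close> have "\<nu> s \<le> - c" if "a \<le> s" for s
      using that by fastforce
    then show False
      using nu_le_neg_impossible[OF pos \<open>c \<ge> 1\<close> \<open>\<bar>h\<^sup>2 - 1\<bar> \<le> h\<^sup>2 * c\<close>] by blast
  next
    case False
    then have "- c < \<nu> s" if "b \<le> s" for s using that by force
    then show False using nu_bounded_below_impossible[OF pos \<open>\<gamma> > 0\<close> rot] by blast
  qed
qed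

lemma exists_mu_neg: "\<exists>a. \<mu> a < 0"
proof (rule ccontr)
  assume "\<nexists>a. \<mu> a < 0"
  then have pos: "\<mu> s > 0" for s
    using mu_pos_if_nonneg by (meson not_le)
  show False
  proof (cases "\<exists>b. \<nu> b < 1 / 2")
    case True
    then show False using nu_below_half_impossible[OF pos] by blast
  next
    case False
    then show False using nu_ge_half_impossible[OF pos] by (meson not_le)
  qed
qed

lemma eventually_mu_neg_nu_bounded:
  obtains B l u where "\<And>s. B \<le> s \<Longrightarrow> \<mu> s < 0 \<and> l \<le> \<nu> s \<and> \<nu> s \<le> u"
  using exists_mu_neg eventually_bounded_if_mu_neg by blast

lemma time_reversal: "K_flow h (\<lambda>s. - \<tau> (- s)) (\<lambda>s. - \<mu> (- s))"
proof
  fix s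
  have "((\<lambda>s. \<tau> (- s)) has_real_derivative (1 + K h (\<tau> (- s)) (\<mu> (- s)) * \<mu> (- s)) * - 1) (at s)"
    by (rule DERIV_chain2[OF tau_deriv DERIV_minus[OF DERIV_ident]])
  from DERIV_minus[OF this]
  show "((\<lambda>s. - \<tau> (- s)) has_real_derivative
      1 + K h (- \<tau> (- s)) (- \<mu> (- s)) * - \<mu> (- s)) (at s)"
    by (simp add: K_odd add.commute)
  have "((\<lambda>s. \<mu> (- s)) has_real_derivative - K h (\<tau> (- s)) (\<mu> (- s)) * \<tau> (- s) * - 1) (at s)"
    by (rule DERIV_chain2[OF mu_deriv DERIV_minus[OF DERIV_ident]])
  from DERIV_minus[OF this]
  show "((\<lambda>s. - \<mu> (- s)) has_real_derivative
      - K h (- \<tau> (- s)) (- \<mu> (- s)) * - \<tau> (- s)) (at s)"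
    by (simp add: K_odd)
qed (rule h_pos)

lemma eventually_mu_pos_nu_bounded_backward:
  obtains A l u where "\<And>s. s \<le> A \<Longrightarrow> \<mu> s > 0 \<and> l \<le> \<nu> s \<and> \<nu> s \<le> u"
proof -
  interpret reversed: K_flow h "\<lambda>s. - \<tau> (- s)" "\<lambda>s. - \<mu> (- s)"
    by (rule time_reversal)
  have nu_reversed: "reversed.\<nu> s = \<nu> (- s)" for s
    unfolding reversed.\<nu>_def \<nu>_def by simp
  obtain B l u where "\<And>s. B \<le> s \<Longrightarrow> - \<mu> (- s) < 0 \<and> l \<le> reversed.\<nu> s \<and> reversed.\<nu> s \<le> u"
    using reversed.eventually_mu_neg_nu_bounded by blast
  then have "\<mu> s > 0 \<and> l \<le> \<nu> s \<and> \<nu> s \<le> u" if "s \<le> - B" for s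
    using nu_reversed[of "- s"] that by (metis minus_less_iff neg_0_less_iff_less minus_le_iff minus_minus)
  then show ?thesis by (rule that)
qed

end

lemma bounded_outside_interval:
  fixes g :: "real \<Rightarrow> real"
  assumes "\<And>s. B \<le> s \<Longrightarrow> P s \<and> l \<le> g s \<and> g s \<le> u"
    and "\<And>s. s \<le> A \<Longrightarrow> P s \<and> l' \<le> g s \<and> g s \<le> u'"
  shows "\<exists>A' B'. A' \<le> B' \<and> (\<forall>s. s \<notin> {A'..B'} \<longrightarrow> P s) \<and> bounded (g ` (- {A'..B'}))"
proof (intro exI conjI)
  have outside: "s \<le> A \<or> B \<le> s" if "s \<notin> {min A B..max A B}" for s
    using that by auto
  show "min A B \<le> max A B" by simp
  show "\<forall>s. s \<notin> {min A B..max A B} \<longrightarrow> P s"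
    using outside assms by blast
  have "g ` (- {min A B..max A B}) \<subseteq> {min l l'..max u u'}"
  proof
    fix y assume "y \<in> g ` (- {min A B..max A B})"
    then obtain s where "y = g s" and "s \<le> A \<or> B \<le> s"
      using outside by blast
    then show "y \<in> {min l l'..max u u'}"
      using assms[of s] by auto
  qed
  then show "bounded (g ` (- {min A B..max A B}))"
    using bounded_subset[OF bounded_closed_interval] by blast
qed

theorem claim7:
  fixes h :: real and \<tau> \<mu> :: "real \<Rightarrow> real"
  assumes "h > 0"
    and "\<And>s. (\<tau> has_real_derivative (1 + K h (\<tau> s) (\<mu> s) * \<mu> s)) (at s)"
    and "\<And>s. (\<mu> has_real_derivative (- K h (\<tau> s) (\<mu> s) * \<tau> s)) (at s)"
  shows "\<exists>A B. A \<le> B \<and> (\<forall>s. s \<notin> {A..B} \<longrightarrow> \<mu> s \<noteq> 0) \<and>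
           bounded ((\<lambda>s. - \<tau> s / \<mu> s) ` (- {A..B}))"
proof -
  interpret K_flow h \<tau> \<mu>
    using assms by unfold_locales
  obtain B l u where fwd: "\<And>s. B \<le> s \<Longrightarrow> \<mu> s < 0 \<and> l \<le> \<nu> s \<and> \<nu> s \<le> u"
    using eventually_mu_neg_nu_bounded by blast
  obtain A l' u' where bwd: "\<And>s. s \<le> A \<Longrightarrow> \<mu> s > 0 \<and> l' \<le> \<nu> s \<and> \<nu> s \<le> u'"
    using eventually_mu_pos_nu_bounded_backward by blast
  have "\<exists>A' B'. A' \<le> B' \<and> (\<forall>s. s \<notin> {A'..B'} \<longrightarrow> \<mu> s \<noteq> 0) \<and> bounded (\<nu> ` (- {A'..B'}))"
    by (rule bounded_outside_interval[where l = l and l' = l']) (use fwd bwd in fastforce)+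
  moreover have "\<nu> = (\<lambda>s. - \<tau> s / \<mu> s)"
    by (simp add: fun_eq_iff \<nu>_def)
  ultimately show ?thesis by simp
qed

end
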